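(* Let $r$ and $d$ be fixed positive integers. Then there is a function $L:\mathbb{N}\to\mathbb{N}$ with $L(t) = rt + o(t)$ as $t \to \infty$ such that the following holds for every positive integer $t$. Given any set $X$ of $L(t)$ points with integer coordinates in $\mathbb{R}^d$, there is a partition of $X$ into $r$ sets $X_1, \ldots, X_r$ such that for every $C \subset X$ with $|C| \le t$, the convex hulls $\operatorname{conv}(X_1 \setminus C), \ldots, \operatorname{conv}(X_r \setminus C)$ have a common point with integer coordinates, i.e. $\bigcap_{j=1}^r \operatorname{conv}(X_j\setminus C) \cap \mathbb{Z}^d \neq \emptyset$.
   Context: $\operatorname{conv}$ denotes the usual convex hull in $\mathbb{R}^d$; the $o(t)$ term may depend on the fixed $r$ and $d$. *)

theory Defs
  imports "HOL-Analysis.Analysis" "HOL-Library.Landau_Symbols"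
begin

definition int_point :: "real ^ 'd \<Rightarrow> bool" where
  "int_point x \<longleftrightarrow> (\<forall>i. x $ i \<in> \<int>)"

end

theory Submission
  imports Defs "HOL-Probability.Probability" "HOL-Real_Asymp.Real_Asymp"
begin

(* Colour X uniformly at random with r colours and remove any set C of at most t points. If the
   sets conv (X_j - C) had no common lattice point, Doignon's theorem would give at most 2^d
   halfspaces, each disjoint from some X_j - C, covering all of X; grouped by colour they cover X
   by r unions U_j of at most 2^d halfspace traces of X, and the points of colour j in U_j lie in C.
   By Radon's theorem and the Sauer-Shelah lemma there are only polynomially many such unions, so by
   Hoeffding's inequality and the union bound some colouring gives every colour a share of at least
   |U|/r - |X|^(3/4) in every such union U. Then |C| >= |X|/r - r |X|^(3/4), which exceeds t once
   |X| = r t + ceiling (t^(4/5)) and t is large; smaller t are handled by monotonicity in t. *)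

section \<open>Doignon's theorem\<close>

definition lattice_parity :: "real ^ 'd \<Rightarrow> 'd \<Rightarrow> bool" where
  "lattice_parity z = (\<lambda>i. even \<lfloor>z $ i\<rfloor>)"

lemma int_point_midpoint:
  assumes "int_point u" "int_point v" "lattice_parity u = lattice_parity v"
  shows "int_point ((1/2) *\<^sub>R (u + v))"
  unfolding int_point_def
proof
  fix i
  obtain m k where m: "u $ i = of_int m" and k: "v $ i = of_int k"
    using assms(1,2) unfolding int_point_def by (meson Ints_cases)
  have "even (m + k)"
    using fun_cong[OF assms(3), of i] m k by (simp add: lattice_parity_def)
  then obtain l where "m + k = 2 * l" by (rule evenE)
  then have "(1/2) * (u $ i + v $ i) = of_int l"
    using m k by (simp add: field_simps flip: of_int_add)
  then show "((1/2) *\<^sub>R (u + v)) $ i \<in> \<int>" by simp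
qed

definition halfspaces_cover :: "('i \<Rightarrow> 'a::real_inner) \<Rightarrow> ('i \<Rightarrow> real) \<Rightarrow> 'i set \<Rightarrow> 'a set \<Rightarrow> bool" where
  "halfspaces_cover A c J S \<longleftrightarrow> (\<forall>s\<in>S. \<exists>i\<in>J. c i \<le> A i \<bullet> s)"

definition midpoint_closed_lattice_set :: "(real ^ 'd) set \<Rightarrow> bool" where
  "midpoint_closed_lattice_set S \<longleftrightarrow> (\<forall>s\<in>S. int_point s) \<and>
     (\<forall>u\<in>S. \<forall>v\<in>S. int_point ((1/2) *\<^sub>R (u + v)) \<longrightarrow> (1/2) *\<^sub>R (u + v) \<in> S)"

text \<open>The witnesses of two members with equal parity vectors have an integral midpoint in \<open>S\<close>,
  and it lies in no halfspace of the cover; so distinct members have distinct parity vectors.\<close>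

lemma card_critical_halfspace_cover_le:
  fixes S :: "(real ^ 'd) set" and A :: "'i \<Rightarrow> real ^ 'd"
  assumes S: "midpoint_closed_lattice_set S"
    and cover: "halfspaces_cover A c J S"
    and critical: "\<forall>q\<in>J. \<exists>z\<in>S. \<forall>i\<in>J. A i \<bullet> z \<le> c i \<and> (i \<noteq> q \<longrightarrow> A i \<bullet> z < c i)"
  shows "card J \<le> 2 ^ CARD('d)"
proof (rule ccontr)
  assume big: "\<not> card J \<le> 2 ^ CARD('d)"
  obtain z where z: "\<And>q. q \<in> J \<Longrightarrow> z q \<in> S \<and> (\<forall>i\<in>J. A i \<bullet> z q \<le> c i \<and> (i \<noteq> q \<longrightarrow> A i \<bullet> z q < c i))"
    using critical by metis
  have "\<not> inj_on (\<lambda>q. lattice_parity (z q)) J"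
  proof
    assume "inj_on (\<lambda>q. lattice_parity (z q)) J"
    then have "card J \<le> card (UNIV :: ('d \<Rightarrow> bool) set)" by (rule card_inj_on_le) auto
    with big show False by (simp add: card_fun)
  qed
  then obtain q1 q2 where q: "q1 \<in> J" "q2 \<in> J" "q1 \<noteq> q2" "lattice_parity (z q1) = lattice_parity (z q2)"
    by (auto simp: inj_on_def)
  define w where "w = (1/2) *\<^sub>R (z q1 + z q2)"
  have "int_point w"
    unfolding w_def using q z S by (intro int_point_midpoint) (auto simp: midpoint_closed_lattice_set_def)
  then have "w \<in> S" using S q z by (auto simp: w_def midpoint_closed_lattice_set_def)
  moreover have "A i \<bullet> w < c i" if "i \<in> J" for i
  proof -
    have "A i \<bullet> w = (A i \<bullet> z q1 + A i \<bullet> z q2) / 2" by (simp add: w_def inner_add_right)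
    moreover have "A i \<bullet> z q1 \<le> c i" "A i \<bullet> z q2 \<le> c i" "A i \<bullet> z q1 < c i \<or> A i \<bullet> z q2 < c i"
      using z[OF q(1)] z[OF q(2)] that q(3) by metis+
    ultimately show ?thesis by argo
  qed
  ultimately show False using cover by (force simp: halfspaces_cover_def)
qed

lemma obtain_maximal_cover_thresholds:
  assumes "finite S" "finite J" "halfspaces_cover A c J S"
  obtains c' where "\<And>q. q \<in> J \<Longrightarrow> c q \<le> c' q" "halfspaces_cover A c' J S"
    "\<And>q s. q \<in> J \<Longrightarrow> s \<in> S \<Longrightarrow> c' q < A q \<bullet> s \<Longrightarrow> \<not> halfspaces_cover A (c'(q := A q \<bullet> s)) J S"
proof -
  define V where "V q = {v \<in> insert (c q) ((\<lambda>s. A q \<bullet> s) ` S). c q \<le> v}" for q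
  define Cands where "Cands = {c' \<in> PiE J V. halfspaces_cover A c' J S}"
  have "finite (V q)" for q using assms(1) by (simp add: V_def)
  then have "finite Cands"
    unfolding Cands_def using assms(2) by (simp add: finite_PiE)
  moreover have "restrict c J \<in> Cands"
    using assms(3) by (auto simp: Cands_def V_def halfspaces_cover_def)
  ultimately obtain c' where c': "c' \<in> Cands" and max: "\<And>c''. c'' \<in> Cands \<Longrightarrow> sum c'' J \<le> sum c' J"
    using ex_is_arg_min_if_finite[of Cands "\<lambda>c'. - sum c' J"]
    unfolding is_arg_min_linorder by fastforce
  show ?thesis
  proof
    show "c q \<le> c' q" if "q \<in> J" for q using c' that by (auto simp: Cands_def V_def)
    show "halfspaces_cover A c' J S" using c' by (simp add: Cands_def)
    show "\<not> halfspaces_cover A (c'(q := A q \<bullet> s)) J S" if "q \<in> J" "s \<in> S" "c' q < A q \<bullet> s" for q s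
    proof
      assume "halfspaces_cover A (c'(q := A q \<bullet> s)) J S"
      moreover have "c' q \<in> V q" using c' that(1) by (auto simp: Cands_def)
      ultimately have "c'(q := A q \<bullet> s) \<in> Cands"
        using c' that by (auto simp: Cands_def V_def PiE_iff extensional_def)
      then have "sum (c'(q := A q \<bullet> s)) J \<le> sum c' J" by (rule max)
      moreover have "sum c' J < sum (c'(q := A q \<bullet> s)) J"
        using that assms(2) by (intro sum_strict_mono_ex1) auto
      ultimately show False by simp
    qed
  qed
qed

text \<open>Raising every threshold as far as possible turns a minimal cover into a critical one:
  a point of \<open>S\<close> missed by all halfspaces but \<open>q\<close> and closest to the boundary of \<open>q\<close>
  must lie on that boundary.\<close>

lemma exists_critical_cover_thresholds:
  assumes "finite S" "finite J" "halfspaces_cover A c J S"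
    and minimal: "\<forall>q\<in>J. \<exists>s\<in>S. \<forall>i\<in>J - {q}. A i \<bullet> s < c i"
  shows "\<exists>c'. halfspaces_cover A c' J S \<and>
    (\<forall>q\<in>J. \<exists>z\<in>S. \<forall>i\<in>J. A i \<bullet> z \<le> c' i \<and> (i \<noteq> q \<longrightarrow> A i \<bullet> z < c' i))"
proof -
  obtain c' where ge: "\<And>q. q \<in> J \<Longrightarrow> c q \<le> c' q" and cover: "halfspaces_cover A c' J S"
    and max: "\<And>q s. q \<in> J \<Longrightarrow> s \<in> S \<Longrightarrow> c' q < A q \<bullet> s \<Longrightarrow> \<not> halfspaces_cover A (c'(q := A q \<bullet> s)) J S"
    using obtain_maximal_cover_thresholds[OF assms(1-3)] by blast
  have "\<exists>z\<in>S. \<forall>i\<in>J. A i \<bullet> z \<le> c' i \<and> (i \<noteq> q \<longrightarrow> A i \<bullet> z < c' i)" if q: "q \<in> J" for q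
  proof -
    define Z where "Z = {s\<in>S. \<forall>i\<in>J - {q}. A i \<bullet> s < c' i}"
    obtain s where "s \<in> S" "\<forall>i\<in>J - {q}. A i \<bullet> s < c i" using minimal q by blast
    then have "s \<in> Z" using ge by (force simp: Z_def)
    then have "Z \<noteq> {}" by blast
    moreover have "finite Z" using assms(1) by (simp add: Z_def)
    ultimately obtain z where "z \<in> Z" and z_min: "\<And>s. s \<in> Z \<Longrightarrow> A q \<bullet> z \<le> A q \<bullet> s"
      using ex_is_arg_min_if_finite[of Z "\<lambda>s. A q \<bullet> s"] unfolding is_arg_min_linorder by fastforce
    then have z: "z \<in> S" "\<forall>i\<in>J - {q}. A i \<bullet> z < c' i" by (auto simp: Z_def)
    have "\<not> c' q < A q \<bullet> z"
    proof
      assume "c' q < A q \<bullet> z"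
      moreover have "halfspaces_cover A (c'(q := A q \<bullet> z)) J S"
        unfolding halfspaces_cover_def
      proof
        fix s assume "s \<in> S"
        then show "\<exists>i\<in>J. (c'(q := A q \<bullet> z)) i \<le> A i \<bullet> s"
          using z_min[of s] q by (cases "s \<in> Z") (auto simp: Z_def not_less)
      qed
      ultimately show False using max q z(1) by blast
    qed
    then show ?thesis using z by (metis DiffI not_less less_imp_le singletonD)
  qed
  then show ?thesis using cover by blast
qed

theorem doignon_halfspace_cover:
  fixes S :: "(real ^ 'd) set" and A :: "'i \<Rightarrow> real ^ 'd"
  assumes "finite S" "midpoint_closed_lattice_set S" "finite I" "halfspaces_cover A c I S"
  shows "\<exists>J\<subseteq>I. card J \<le> 2 ^ CARD('d) \<and> halfspaces_cover A c J S"
proof -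
  obtain J where J: "J \<subseteq> I" "halfspaces_cover A c J S"
    and least: "\<And>J'. J' \<subseteq> I \<Longrightarrow> halfspaces_cover A c J' S \<Longrightarrow> card J \<le> card J'"
    using ex_has_least_nat[of "\<lambda>J. J \<subseteq> I \<and> halfspaces_cover A c J S" I card] assms(4) by blast
  have finJ: "finite J" using J(1) assms(3) by (rule finite_subset)
  have "\<forall>q\<in>J. \<exists>s\<in>S. \<forall>i\<in>J - {q}. A i \<bullet> s < c i"
  proof (rule ballI, rule ccontr)
    fix q assume q: "q \<in> J" and "\<not> (\<exists>s\<in>S. \<forall>i\<in>J - {q}. A i \<bullet> s < c i)"
    then have "halfspaces_cover A c (J - {q}) S" by (force simp: halfspaces_cover_def not_less)
    then have "card J \<le> card (J - {q})" using J(1) by (intro least) auto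
    with card_Diff1_less[OF finJ q] show False by linarith
  qed
  then obtain c' where "halfspaces_cover A c' J S"
    "\<forall>q\<in>J. \<exists>z\<in>S. \<forall>i\<in>J. A i \<bullet> z \<le> c' i \<and> (i \<noteq> q \<longrightarrow> A i \<bullet> z < c' i)"
    using exists_critical_cover_thresholds[OF assms(1) finJ J(2)] by blast
  then have "card J \<le> 2 ^ CARD('d)" using assms(2) by (intro card_critical_halfspace_cover_le)
  with J show ?thesis by blast
qed

section \<open>The Sauer--Shelah lemma for halfspaces\<close>

definition shatters :: "'a set set \<Rightarrow> 'a set \<Rightarrow> bool" where
  "shatters F S \<longleftrightarrow> (\<lambda>A. A \<inter> S) ` F = Pow S"

lemma card_image_remove_plus_card_pairs:
  assumes "finite F"
  shows "card ((\<lambda>A. A - {x}) ` F) + card {B\<in>F. x \<notin> B \<and> insert x B \<in> F} = card F"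
proof -
  define Fa where "Fa = {A\<in>F. x \<notin> A}"
  define Fb where "Fb = {A\<in>F. x \<in> A}"
  have F: "F = Fa \<union> Fb" "Fa \<inter> Fb = {}" by (auto simp: Fa_def Fb_def)
  have "(\<lambda>A. A - {x}) ` Fa = Fa" by (force simp: Fa_def)
  then have img: "(\<lambda>A. A - {x}) ` F = Fa \<union> (\<lambda>A. A - {x}) ` Fb" by (simp add: F(1) image_Un)
  have pairs: "Fa \<inter> (\<lambda>A. A - {x}) ` Fb = {B\<in>F. x \<notin> B \<and> insert x B \<in> F}"
  proof (intro equalityI subsetI)
    fix B assume "B \<in> Fa \<inter> (\<lambda>A. A - {x}) ` Fb"
    then obtain A where "B \<in> F" "x \<notin> B" "A \<in> F" "x \<in> A" "B = A - {x}" by (auto simp: Fa_def Fb_def)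
    then show "B \<in> {B\<in>F. x \<notin> B \<and> insert x B \<in> F}" by (simp add: insert_absorb)
  next
    fix B assume B: "B \<in> {B\<in>F. x \<notin> B \<and> insert x B \<in> F}"
    then have "B = insert x B - {x}" "insert x B \<in> Fb" by (auto simp: Fb_def)
    with B show "B \<in> Fa \<inter> (\<lambda>A. A - {x}) ` Fb" by (auto simp: Fa_def)
  qed
  have "inj_on (\<lambda>A. A - {x}) Fb" by (auto simp: inj_on_def Fb_def)
  moreover have "finite Fa" "finite Fb" using assms by (auto simp: Fa_def Fb_def)
  moreover have "card F = card Fa + card Fb" using F \<open>finite Fa\<close> \<open>finite Fb\<close> by (simp add: card_Un_disjoint)
  ultimately show ?thesis
    using card_Un_Int[of Fa "(\<lambda>A. A - {x}) ` Fb"] by (simp add: img pairs card_image)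
qed

lemma shatters_if_shatters_image_remove:
  assumes "x \<notin> T" "shatters ((\<lambda>A. A - {x}) ` F) T"
  shows "shatters F T"
proof -
  have "(\<lambda>A. A \<inter> T) ` ((\<lambda>A. A - {x}) ` F) = (\<lambda>A. A \<inter> T) ` F"
    unfolding image_image using assms(1) by (intro image_cong) auto
  with assms(2) show ?thesis by (simp add: shatters_def)
qed

lemma shatters_insert_if_shatters_pairs:
  assumes "x \<notin> S" "shatters {B\<in>F. x \<notin> B \<and> insert x B \<in> F} S"
  shows "shatters F (insert x S)"
  unfolding shatters_def
proof (intro equalityI subsetI)
  fix U assume U: "U \<in> Pow (insert x S)"
  then have "U - {x} \<in> (\<lambda>A. A \<inter> S) ` {B\<in>F. x \<notin> B \<and> insert x B \<in> F}"
    using assms(2) by (auto simp: shatters_def)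
  then obtain B where B: "B \<in> F" "x \<notin> B" "insert x B \<in> F" "B \<inter> S = U - {x}" by auto
  show "U \<in> (\<lambda>A. A \<inter> insert x S) ` F"
  proof (cases "x \<in> U")
    case True
    then have "U = insert x B \<inter> insert x S" using B(4) U by auto
    with B(3) show ?thesis by blast
  next
    case False
    then have "U = B \<inter> insert x S" using B(2,4) U by auto
    with B(1) show ?thesis by blast
  qed
qed auto

theorem card_le_card_shattered_subsets:
  assumes "finite X" "F \<subseteq> Pow X"
  shows "card F \<le> card {S. S \<subseteq> X \<and> shatters F S}"
  using assms
proof (induction X arbitrary: F rule: finite_induct)
  case empty
  show ?case
  proof (cases "F = {}")
    case False
    with empty.prems have "F = {{}}" by (simp add: subset_singleton_iff)
    moreover have "{S. S \<subseteq> {} \<and> shatters {{}} S} = {{}}" by (auto simp: shatters_def)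
    ultimately show ?thesis by (metis order_refl)
  qed simp
next
  case (insert x X)
  define F0 where "F0 = (\<lambda>A. A - {x}) ` F"
  define F1 where "F1 = {B\<in>F. x \<notin> B \<and> insert x B \<in> F}"
  define Sh where "Sh G = {S. S \<subseteq> X \<and> shatters G S}" for G
  have "finite F" by (rule finite_subset[OF insert.prems]) (simp add: insert.hyps(1))
  have "card F = card F0 + card F1"
    unfolding F0_def F1_def using card_image_remove_plus_card_pairs[OF \<open>finite F\<close>] by simp
  also have "\<dots> \<le> card (Sh F0) + card (Sh F1)"
    unfolding Sh_def using insert.prems by (intro add_mono insert.IH) (auto simp: F0_def F1_def)
  also have "\<dots> = card (Sh F0 \<union> insert x ` Sh F1)"
  proof -
    have "finite (Sh G)" for G using insert.hyps(1) by (simp add: Sh_def)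
    moreover have "Sh F0 \<inter> insert x ` Sh F1 = {}" using insert.hyps(2) by (auto simp: Sh_def)
    ultimately have "card (Sh F0 \<union> insert x ` Sh F1) = card (Sh F0) + card (insert x ` Sh F1)"
      by (intro card_Un_disjoint) auto
    moreover have "inj_on (insert x) (Sh F1)"
    proof (rule inj_onI)
      fix S1 S2 assume "S1 \<in> Sh F1" "S2 \<in> Sh F1" "insert x S1 = insert x S2"
      moreover have "x \<notin> S1" "x \<notin> S2" using calculation(1,2) insert.hyps(2) by (auto simp: Sh_def)
      ultimately show "S1 = S2" by (metis insert_ident)
    qed
    ultimately show ?thesis using card_image by metis
  qed
  also have "\<dots> \<le> card {S. S \<subseteq> insert x X \<and> shatters F S}"
  proof (rule card_mono)
    show "finite {S. S \<subseteq> insert x X \<and> shatters F S}" using insert.hyps(1) by simp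
    have "x \<notin> S" if "S \<in> Sh G" for S G using that insert.hyps(2) by (auto simp: Sh_def)
    then show "Sh F0 \<union> insert x ` Sh F1 \<subseteq> {S. S \<subseteq> insert x X \<and> shatters F S}"
      unfolding F0_def F1_def
      by (auto intro: shatters_if_shatters_image_remove shatters_insert_if_shatters_pairs simp: Sh_def)
  qed
  finally show ?case .
qed

lemma card_subsets_card_le:
  assumes "finite X"
  shows "card {S. S \<subseteq> X \<and> card S \<le> k} \<le> (card X + 1) ^ k"
proof -
  have "{S. S \<subseteq> X \<and> card S \<le> k} = (\<Union>i\<le>k. {S. S \<subseteq> X \<and> card S = i})" by auto
  then have "card {S. S \<subseteq> X \<and> card S \<le> k} \<le> (\<Sum>i\<le>k. card X choose i)"
    using card_UN_le[of "{..k}" "\<lambda>i. {S. S \<subseteq> X \<and> card S = i}"] by (simp add: n_subsets assms)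
  also have "\<dots> \<le> (\<Sum>i\<le>k. (k choose i) * card X ^ i * 1 ^ (k - i))"
  proof (rule sum_mono)
    fix i assume "i \<in> {..k}"
    then have "1 \<le> k choose i" by (simp add: Suc_leI)
    have "card X choose i \<le> card X ^ i"
      by (cases "i \<le> card X") (simp_all add: binomial_le_pow binomial_eq_0)
    also have "\<dots> \<le> (k choose i) * card X ^ i"
      using mult_le_mono1[OF \<open>1 \<le> k choose i\<close>, of "card X ^ i"] by simp
    finally show "card X choose i \<le> (k choose i) * card X ^ i * 1 ^ (k - i)" by simp
  qed
  also have "\<dots> = (card X + 1) ^ k" using binomial_ring[of "card X" 1 k] by simp
  finally show ?thesis .
qed

lemma card_small_Unions_le:
  assumes "finite T"
  shows "card {\<Union>G | G. G \<subseteq> T \<and> card G \<le> h} \<le> (card T + 1) ^ h"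
proof -
  have "{\<Union>G | G. G \<subseteq> T \<and> card G \<le> h} = Union ` {G. G \<subseteq> T \<and> card G \<le> h}" by auto
  then have "card {\<Union>G | G. G \<subseteq> T \<and> card G \<le> h} \<le> card {G. G \<subseteq> T \<and> card G \<le> h}"
    using assms by (simp add: card_image_le)
  also have "\<dots> \<le> (card T + 1) ^ h" by (rule card_subsets_card_le[OF assms])
  finally show ?thesis .
qed

definition halfspace_traces :: "'a::euclidean_space set \<Rightarrow> 'a set set" where
  "halfspace_traces X = {{x\<in>X. c \<le> a \<bullet> x} | a c. True}"

text \<open>A Radon partition of a shattered set would be cut out by a halfspace, yet the convex
  hulls of its two parts meet.\<close>

lemma card_le_if_shatters_halfspace_traces:
  fixes X :: "'a::euclidean_space set"
  assumes "finite S" "S \<subseteq> X" "shatters (halfspace_traces X) S"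
  shows "card S \<le> DIM('a) + 1"
proof (rule ccontr)
  assume "\<not> ?thesis"
  then have "affine_dependent S" using affine_dependent_biggerset[OF assms(1)] by simp
  then obtain M P where MP: "M \<inter> P = {}" "M \<union> P = S" "convex hull M \<inter> convex hull P \<noteq> {}"
    using Radon_partition[OF assms(1)] by blast
  have "M \<in> (\<lambda>A. A \<inter> S) ` halfspace_traces X" using assms(3) MP by (auto simp: shatters_def)
  then obtain a c where M: "M = {x\<in>X. c \<le> a \<bullet> x} \<inter> S" by (auto simp: halfspace_traces_def)
  then have "convex hull M \<subseteq> {x. c \<le> a \<bullet> x}"
    by (intro hull_minimal) (auto simp: convex_halfspace_ge)
  moreover have "P \<subseteq> {x. a \<bullet> x < c}"
  proof
    fix x assume "x \<in> P"
    then have "x \<in> X" "x \<in> S" "x \<notin> M" using MP assms(2) by auto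
    then show "x \<in> {x. a \<bullet> x < c}" using M by (simp add: not_le)
  qed
  then have "convex hull P \<subseteq> {x. a \<bullet> x < c}"
    by (intro hull_minimal) (auto simp: convex_halfspace_lt)
  moreover obtain z where "z \<in> convex hull M" "z \<in> convex hull P" using MP(3) by blast
  ultimately have "c \<le> a \<bullet> z" "a \<bullet> z < c" by auto
  then show False by simp
qed

lemma card_halfspace_traces_le:
  fixes X :: "'a::euclidean_space set"
  assumes "finite X"
  shows "card (halfspace_traces X) \<le> (card X + 1) ^ (DIM('a) + 1)"
proof -
  have "card (halfspace_traces X) \<le> card {S. S \<subseteq> X \<and> shatters (halfspace_traces X) S}"
    using assms by (intro card_le_card_shattered_subsets) (auto simp: halfspace_traces_def)
  also have "\<dots> \<le> card {S. S \<subseteq> X \<and> card S \<le> DIM('a) + 1}"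
    using assms card_le_if_shatters_halfspace_traces[OF finite_subset[OF _ assms]]
    by (intro card_mono) auto
  also have "\<dots> \<le> (card X + 1) ^ (DIM('a) + 1)" by (rule card_subsets_card_le[OF assms])
  finally show ?thesis .
qed

section \<open>Random colourings\<close>

lemma expectation_color_indicator:
  assumes "finite X" "x \<in> X" "j < r"
  shows "measure_pmf.expectation (Pi_pmf X 0 (\<lambda>_. pmf_of_set {..<r}))
           (\<lambda>f. if f x = j then 1 else 0 :: real) = 1 / real r"
proof -
  have "measure_pmf.expectation (Pi_pmf X 0 (\<lambda>_. pmf_of_set {..<r})) (\<lambda>f. if f x = j then 1 else 0 :: real)
      = measure_pmf.expectation (map_pmf (\<lambda>f. f x) (Pi_pmf X 0 (\<lambda>_. pmf_of_set {..<r})))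
          (\<lambda>k. if k = j then 1 else 0 :: real)"
    by simp
  also have "map_pmf (\<lambda>f. f x) (Pi_pmf X 0 (\<lambda>_. pmf_of_set {..<r})) = pmf_of_set {..<r}"
    using assms by (simp add: Pi_pmf_component)
  also have "measure_pmf.expectation (pmf_of_set {..<r}) (\<lambda>k. if k = j then 1 else 0 :: real)
      = (\<Sum>k<r. if k = j then 1 else 0 :: real) / real r"
    using assms(3) by (subst integral_pmf_of_set) auto
  finally show ?thesis using assms(3) by simp
qed

lemma prob_color_class_deficit_le:
  assumes "finite X" "U \<subseteq> X" "U \<noteq> {}" "j < r" "lam \<ge> 0"
  defines "P \<equiv> Pi_pmf X 0 (\<lambda>_. pmf_of_set {..<r})"
  shows "measure_pmf.prob P {f. real (card {x\<in>U. f x = j}) < real (card U) / real r - lam}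
           \<le> exp (-2 * lam\<^sup>2 / real (card X))"
proof -
  define Y where "Y = (\<lambda>x (f :: 'a \<Rightarrow> nat). if f x = j then 1 else 0 :: real)"
  have finU: "finite U" using assms(1,2) by (rule finite_subset[rotated])
  interpret H: Hoeffding_ineq "measure_pmf P" U Y "\<lambda>_. 0" "\<lambda>_. 1"
    "\<Sum>x\<in>U. measure_pmf.expectation P (Y x)"
  proof unfold_locales
    have "prob_space.indep_vars (measure_pmf P) (\<lambda>_. count_space UNIV) (\<lambda>x f. f x) U"
      unfolding P_def using indep_vars_Pi_pmf[OF assms(1)] assms(2)
      by (rule prob_space.indep_vars_subset[OF measure_pmf.prob_space_axioms])
    then show "prob_space.indep_vars (measure_pmf P) (\<lambda>_. borel) Y U"
      unfolding Y_def
      by (rule prob_space.indep_vars_compose2[where Y = "\<lambda>_ k. if k = j then 1 else 0 :: real",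
            OF measure_pmf.prob_space_axioms]) auto
  qed (auto simp: Y_def finU)
  have sum_Y: "(\<Sum>x\<in>U. Y x f) = real (card {x\<in>U. f x = j})" for f
    using finU by (simp add: Y_def sum.If_cases Int_def conj_commute)
  have "(\<Sum>x\<in>U. measure_pmf.expectation P (Y x)) = (\<Sum>x\<in>U. 1 / real r)"
    using assms(1,2,4) by (intro sum.cong) (auto simp: P_def Y_def intro!: expectation_color_indicator)
  then have mean: "(\<Sum>x\<in>U. measure_pmf.expectation P (Y x)) = real (card U) / real r" by simp
  have "measure_pmf.prob P {f. real (card {x\<in>U. f x = j}) < real (card U) / real r - lam}
      \<le> measure_pmf.prob P {f \<in> space (measure_pmf P).
           (\<Sum>x\<in>U. Y x f) \<le> (\<Sum>x\<in>U. measure_pmf.expectation P (Y x)) - lam}"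
    by (intro measure_pmf.finite_measure_mono) (auto simp: sum_Y mean)
  also have "\<dots> \<le> exp (-2 * lam\<^sup>2 / (\<Sum>x\<in>U. (1 - 0)\<^sup>2))"
    using assms(3) finU by (intro H.Hoeffding_ineq_le assms(5)) (simp add: card_gt_0_iff)
  also have "\<dots> \<le> exp (-2 * lam\<^sup>2 / real (card X))"
    using assms(3) finU card_mono[OF assms(1,2)]
    by (simp add: card_gt_0_iff frac_le)
  finally show ?thesis .
qed

lemma exists_balanced_coloring:
  assumes "finite X" "r > 0" "finite UU" "\<And>U. U \<in> UU \<Longrightarrow> U \<subseteq> X" "lam \<ge> 0"
    and small: "real r * real (card UU) * exp (-2 * lam\<^sup>2 / real (card X)) < 1"
  shows "\<exists>f. (\<forall>x\<in>X. f x < r) \<and>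
    (\<forall>U\<in>UU. \<forall>j<r. real (card U) / real r - lam \<le> real (card {x\<in>U. f x = j}))"
proof -
  define P where "P = Pi_pmf X 0 (\<lambda>_. pmf_of_set {..<r})"
  define B where "B p = {f. real (card {x\<in>fst p. f x = snd p}) < real (card (fst p)) / real r - lam}"
    for p :: "'a set \<times> nat"
  define Bad where "Bad = (\<Union>p\<in>UU \<times> {..<r}. B p)"
  have "measure_pmf.prob P Bad \<le> (\<Sum>p\<in>UU \<times> {..<r}. measure_pmf.prob P (B p))"
    unfolding Bad_def using assms(3) by (intro measure_pmf.finite_measure_subadditive_finite) auto
  also have "\<dots> \<le> (\<Sum>p\<in>UU \<times> {..<r}. exp (-2 * lam\<^sup>2 / real (card X)))"
  proof (intro sum_mono)
    fix p assume "p \<in> UU \<times> {..<r}"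
    then show "measure_pmf.prob P (B p) \<le> exp (-2 * lam\<^sup>2 / real (card X))"
      using assms prob_color_class_deficit_le[of X "fst p" "snd p" r lam] unfolding P_def B_def
      by (cases "fst p = {}") auto
  qed
  also have "\<dots> < 1" using small by (simp add: card_cartesian_product mult.commute)
  finally have "measure_pmf.prob P (UNIV - Bad) \<noteq> 0"
    using measure_pmf.prob_compl[of Bad P] by simp
  then obtain f where f: "f \<in> set_pmf P" "f \<notin> Bad" using measure_pmf_zero_iff by blast
  have "set_pmf (pmf_of_set {..<r}) = {..<r}" using assms(2) by (intro set_pmf_of_set) auto
  then have "set_pmf P \<subseteq> PiE_dflt X 0 (\<lambda>_. {..<r})"
    using set_Pi_pmf_subset'[OF assms(1), of 0 "\<lambda>_. pmf_of_set {..<r}"] by (simp add: P_def o_def)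
  then have "\<forall>x\<in>X. f x < r" using f(1) by (auto simp: PiE_dflt_def)
  with f(2) show ?thesis by (force simp: Bad_def B_def not_less)
qed

section \<open>Robust colourings\<close>

lemma separating_halfspace_finite:
  fixes Y :: "'a::euclidean_space set"
  assumes "finite Y" "s \<notin> convex hull Y"
  shows "\<exists>a c. (\<forall>y\<in>Y. a \<bullet> y < c) \<and> c \<le> a \<bullet> s"
proof -
  have "closed (convex hull Y)"
    using assms(1) by (simp add: compact_convex_hull finite_imp_compact compact_imp_closed)
  then obtain a b where "a \<bullet> s < b" "\<forall>x\<in>convex hull Y. b < a \<bullet> x"
    using separating_hyperplane_closed_point[OF convex_convex_hull _ assms(2)] by blast
  then have "(\<forall>y\<in>Y. (- a) \<bullet> y < - b) \<and> - b \<le> (- a) \<bullet> s" by (auto dest: hull_inc[of _ Y convex])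
  then show ?thesis by blast
qed

lemma finite_int_points_box: "finite {s :: real ^ 'd. int_point s \<and> (\<forall>i. \<bar>s $ i\<bar> \<le> R)}"
proof -
  let ?A = "{k :: real. k \<in> \<int> \<and> \<bar>k\<bar> \<le> R}"
  have "{s :: real ^ 'd. int_point s \<and> (\<forall>i. \<bar>s $ i\<bar> \<le> R)} \<subseteq> (\<lambda>g. \<chi> i. g i) ` (UNIV \<rightarrow>\<^sub>E ?A)"
  proof
    fix s :: "real ^ 'd" assume "s \<in> {s. int_point s \<and> (\<forall>i. \<bar>s $ i\<bar> \<le> R)}"
    then have "(\<lambda>i. s $ i) \<in> UNIV \<rightarrow>\<^sub>E ?A" by (auto simp: int_point_def)
    then show "s \<in> (\<lambda>g. \<chi> i. g i) ` (UNIV \<rightarrow>\<^sub>E ?A)" by (auto intro: image_eqI[where x = "\<lambda>i. s $ i"])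
  qed
  moreover have "finite ((\<lambda>g. \<chi> i. g i) ` (UNIV \<rightarrow>\<^sub>E ?A) :: (real ^ 'd) set)"
    using finite_abs_int_segment[of R] by (intro finite_imageI finite_PiE) auto
  ultimately show ?thesis by (rule finite_subset)
qed

text \<open>Doignon's theorem, applied to the lattice points of a box containing \<open>X\<close>, each of
  which is cut off from some \<open>conv (Y j)\<close> by a separating halfspace.\<close>

lemma few_halfspaces_cover_if_no_common_lattice_point:
  fixes X :: "(real ^ 'd) set" and Y :: "nat \<Rightarrow> (real ^ 'd) set"
  assumes "finite X" "\<forall>x\<in>X. int_point x" "\<And>j. j < r \<Longrightarrow> finite (Y j)"
    and no_point: "\<not> (\<exists>p. int_point p \<and> (\<forall>j<r. p \<in> convex hull Y j))"
  shows "\<exists>H. finite H \<and> card H \<le> 2 ^ CARD('d) \<and> (\<forall>(a, c, j)\<in>H. j < r \<and> (\<forall>y\<in>Y j. a \<bullet> y < c)) \<and>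
    (\<forall>x\<in>X. \<exists>(a, c, j)\<in>H. c \<le> a \<bullet> x)"
proof -
  obtain R where R: "\<forall>x\<in>X. norm x \<le> R" using finite_imp_bounded[OF assms(1)] bounded_iff by blast
  define S where "S = {s :: real ^ 'd. int_point s \<and> (\<forall>i. \<bar>s $ i\<bar> \<le> R)}"
  have "finite S" by (simp add: S_def finite_int_points_box)
  have "X \<subseteq> S"
  proof
    fix x assume "x \<in> X"
    then have "\<bar>x $ i\<bar> \<le> R" for i using R component_le_norm_cart[of x i] by fastforce
    with \<open>x \<in> X\<close> assms(2) show "x \<in> S" by (simp add: S_def)
  qed
  have "midpoint_closed_lattice_set S"
    unfolding midpoint_closed_lattice_set_def
  proof (intro conjI ballI impI)
    fix u v assume "u \<in> S" "v \<in> S" "int_point ((1/2) *\<^sub>R (u + v))"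
    moreover have "\<bar>((1/2) *\<^sub>R (u + v)) $ i\<bar> \<le> R" for i
    proof -
      have "\<bar>u $ i\<bar> \<le> R" "\<bar>v $ i\<bar> \<le> R" using \<open>u \<in> S\<close> \<open>v \<in> S\<close> by (auto simp: S_def)
      then show ?thesis by (auto simp: abs_le_iff)
    qed
    ultimately show "(1/2) *\<^sub>R (u + v) \<in> S" by (simp add: S_def)
  qed (simp add: S_def)
  have "\<forall>p. \<exists>h. snd p < r \<and> fst p \<notin> convex hull Y (snd p) \<longrightarrow>
      (\<forall>y\<in>Y (snd p). fst h \<bullet> y < snd h) \<and> snd h \<le> fst h \<bullet> fst p"
    using separating_halfspace_finite[OF assms(3)] by auto
  then obtain h where sep: "\<And>p. snd p < r \<Longrightarrow> fst p \<notin> convex hull Y (snd p) \<Longrightarrow>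
      (\<forall>y\<in>Y (snd p). fst (h p) \<bullet> y < snd (h p)) \<and> snd (h p) \<le> fst (h p) \<bullet> fst p"
    by metis
  define I where "I = {p \<in> S \<times> {..<r}. fst p \<notin> convex hull Y (snd p)}"
  have "finite I" using \<open>finite S\<close> by (simp add: I_def)
  moreover have "halfspaces_cover (fst \<circ> h) (snd \<circ> h) I S"
    unfolding halfspaces_cover_def
  proof
    fix s assume "s \<in> S"
    then obtain j where "j < r" "s \<notin> convex hull Y j" using no_point by (auto simp: S_def)
    with \<open>s \<in> S\<close> sep[of "(s, j)"] show "\<exists>p\<in>I. (snd \<circ> h) p \<le> (fst \<circ> h) p \<bullet> s"
      by (intro bexI[of _ "(s, j)"]) (auto simp: I_def)
  qed
  ultimately obtain J where J: "J \<subseteq> I" "card J \<le> 2 ^ CARD('d)" "halfspaces_cover (fst \<circ> h) (snd \<circ> h) J S"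
    using doignon_halfspace_cover[OF \<open>finite S\<close> \<open>midpoint_closed_lattice_set S\<close>] by blast
  define H where "H = (\<lambda>p. (fst (h p), snd (h p), snd p)) ` J"
  have "finite J" using J(1) \<open>finite I\<close> by (rule finite_subset)
  then have "finite H" "card H \<le> 2 ^ CARD('d)"
    using J(2) card_image_le[of J "\<lambda>p. (fst (h p), snd (h p), snd p)"] by (auto simp: H_def)
  moreover have "\<forall>(a, c, j)\<in>H. j < r \<and> (\<forall>y\<in>Y j. a \<bullet> y < c)"
    using J(1) sep by (auto simp: H_def I_def)
  moreover have "\<exists>(a, c, j)\<in>H. c \<le> a \<bullet> x" if "x \<in> X" for x
  proof -
    have "x \<in> S" using that \<open>X \<subseteq> S\<close> by blast
    then obtain p where "p \<in> J" "snd (h p) \<le> fst (h p) \<bullet> x"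
      using J(3) unfolding halfspaces_cover_def o_def by blast
    then show ?thesis by (force simp: H_def)
  qed
  ultimately show ?thesis by blast
qed

definition robust_coloring :: "(real ^ 'd) set \<Rightarrow> nat \<Rightarrow> nat \<Rightarrow> (real ^ 'd \<Rightarrow> nat) \<Rightarrow> bool" where
  "robust_coloring X r t f \<longleftrightarrow> (\<forall>x\<in>X. f x < r) \<and>
     (\<forall>C. C \<subseteq> X \<and> card C \<le> t \<longrightarrow> (\<exists>p. int_point p \<and> (\<forall>j<r. p \<in> convex hull ({x\<in>X. f x = j} - C))))"

lemma robust_coloring_mono: "robust_coloring X r t f \<Longrightarrow> t' \<le> t \<Longrightarrow> robust_coloring X r t' f"
  by (auto simp: robust_coloring_def)

lemma card_le_if_balanced_color_classes_in:
  assumes "finite X" "r > 0" "C \<subseteq> X" "X \<subseteq> (\<Union>j<r. U j)" "\<And>j. U j \<subseteq> X"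
    and balanced: "\<And>j. j < r \<Longrightarrow> real (card (U j)) / real r - lam \<le> real (card {x\<in>U j. f x = j})"
    and in_C: "\<And>j. {x\<in>U j. f x = j} \<subseteq> C"
  shows "real (card X) - real r ^ 2 * lam \<le> real r * real (card C)"
proof -
  have fin: "finite (U j)" for j using assms(1,5) by (rule finite_subset[rotated])
  have "real (card X) \<le> (\<Sum>j<r. real (card (U j)))"
  proof -
    have "card X \<le> card (\<Union>j<r. U j)" using fin by (intro card_mono[OF _ assms(4)]) auto
    also have "\<dots> \<le> (\<Sum>j<r. card (U j))" by (rule card_UN_le) simp
    finally show ?thesis by (simp flip: of_nat_sum)
  qed
  then have "real (card X) / real r - real r * lam \<le> (\<Sum>j<r. real (card (U j)) / real r - lam)"
    using assms(2) by (simp add: sum_subtractf divide_right_mono flip: sum_divide_distrib)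
  also have "\<dots> \<le> (\<Sum>j<r. real (card {x\<in>U j. f x = j}))" by (rule sum_mono) (simp add: balanced)
  also have "\<dots> = real (card (\<Union>j<r. {x\<in>U j. f x = j}))"
    using fin by (subst card_UN_disjoint) auto
  also have "\<dots> \<le> real (card C)"
    using in_C finite_subset[OF assms(3,1)] by (intro of_nat_mono card_mono) auto
  finally show ?thesis using assms(2) by (simp add: field_simps power2_eq_square)
qed

lemma robust_coloring_if_balanced:
  fixes X :: "(real ^ 'd) set"
  assumes "finite X" "\<forall>x\<in>X. int_point x" "r > 0" "\<forall>x\<in>X. f x < r"
    and balanced: "\<And>U j. U \<in> {\<Union>G | G. G \<subseteq> halfspace_traces X \<and> card G \<le> 2 ^ CARD('d)} \<Longrightarrow> j < r \<Longrightarrow>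
      real (card U) / real r - lam \<le> real (card {x\<in>U. f x = j})"
    and margin: "real r ^ 2 * lam < real (card X) - real r * real t"
  shows "robust_coloring X r t f"
  unfolding robust_coloring_def
proof (intro conjI allI impI)
  fix C assume C: "C \<subseteq> X \<and> card C \<le> t"
  show "\<exists>p. int_point p \<and> (\<forall>j<r. p \<in> convex hull ({x\<in>X. f x = j} - C))"
  proof (rule ccontr)
    assume no_point: "\<not> ?thesis"
    have "\<And>j. j < r \<Longrightarrow> finite ({x\<in>X. f x = j} - C)" using assms(1) by simp
    then obtain H where H: "finite H" "card H \<le> 2 ^ CARD('d)"
      "\<forall>(a, c, j)\<in>H. j < r \<and> (\<forall>y\<in>{x\<in>X. f x = j} - C. a \<bullet> y < c)"
      "\<forall>x\<in>X. \<exists>(a, c, j)\<in>H. c \<le> a \<bullet> x"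
      using few_halfspaces_cover_if_no_common_lattice_point[OF assms(1,2), of r "\<lambda>j. {x\<in>X. f x = j} - C"]
        no_point by blast
    define G where "G j = (\<lambda>(a, c, _). {x\<in>X. c \<le> a \<bullet> x}) ` {h\<in>H. snd (snd h) = j}" for j
    define U where "U j = \<Union>(G j)" for j
    have U_traces: "U j \<in> {\<Union>G | G. G \<subseteq> halfspace_traces X \<and> card G \<le> 2 ^ CARD('d)}" for j
    proof -
      have "card (G j) \<le> card {h\<in>H. snd (snd h) = j}" unfolding G_def by (rule card_image_le) (simp add: H(1))
      also have "\<dots> \<le> card H" using H(1) by (intro card_mono) auto
      finally have "card (G j) \<le> 2 ^ CARD('d)" using H(2) by linarith
      moreover have "G j \<subseteq> halfspace_traces X" by (auto simp: G_def halfspace_traces_def)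
      ultimately show ?thesis unfolding U_def by blast
    qed
    have "real (card X) - real r ^ 2 * lam \<le> real r * real (card C)"
    proof (rule card_le_if_balanced_color_classes_in[OF assms(1,3)])
      show "real (card (U j)) / real r - lam \<le> real (card {x\<in>U j. f x = j})" if "j < r" for j
        using balanced[OF U_traces that] .
      show "C \<subseteq> X" using C by blast
      show "X \<subseteq> (\<Union>j<r. U j)"
      proof
        fix x assume "x \<in> X"
        then obtain a c j where "(a, c, j) \<in> H" "c \<le> a \<bullet> x" using H(4) by blast
        moreover from this(1) have "j < r" using H(3) by blast
        ultimately show "x \<in> (\<Union>j<r. U j)" using \<open>x \<in> X\<close> by (force simp: U_def G_def)
      qed
      show "U j \<subseteq> X" for j by (auto simp: U_def G_def)
      show "{x\<in>U j. f x = j} \<subseteq> C" for j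
      proof
        fix x assume "x \<in> {x\<in>U j. f x = j}"
        then obtain a c where h: "(a, c, j) \<in> H" and "c \<le> a \<bullet> x" "x \<in> X" "f x = j"
          by (auto simp: U_def G_def)
        moreover have "\<forall>y\<in>{x\<in>X. f x = j} - C. a \<bullet> y < c" using H(3) h by auto
        ultimately show "x \<in> C" by force
      qed
    qed
    moreover have "real r * real (card C) \<le> real r * real t" using C by (simp add: mult_left_mono)
    ultimately show False using margin by linarith
  qed
qed (use assms(4) in blast)

lemma robust_coloring_exists:
  fixes X :: "(real ^ 'd) set"
  assumes "finite X" "\<forall>x\<in>X. int_point x" "r > 0" "lam \<ge> 0"
    and few_bad_events: "real r * ((real (card X) + 1) ^ (CARD('d) + 1) + 1) ^ 2 ^ CARD('d) *
      exp (-2 * lam\<^sup>2 / real (card X)) < 1"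
    and margin: "real r ^ 2 * lam < real (card X) - real r * real t"
  shows "\<exists>f. robust_coloring X r t f"
proof -
  define UU where "UU = {\<Union>G | G. G \<subseteq> halfspace_traces X \<and> card G \<le> 2 ^ CARD('d)}"
  have "halfspace_traces X \<subseteq> Pow X" by (auto simp: halfspace_traces_def)
  then have "finite (halfspace_traces X)" by (rule finite_subset) (simp add: assms(1))
  then have "card UU \<le> (card (halfspace_traces X) + 1) ^ 2 ^ CARD('d)"
    unfolding UU_def by (rule card_small_Unions_le)
  also have "\<dots> \<le> ((card X + 1) ^ (CARD('d) + 1) + 1) ^ 2 ^ CARD('d)"
    using card_halfspace_traces_le[OF assms(1)] by (intro power_mono) auto
  finally have "real (card UU) \<le> real (((card X + 1) ^ (CARD('d) + 1) + 1) ^ 2 ^ CARD('d))"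
    by (rule of_nat_mono)
  then have "real (card UU) \<le> ((real (card X) + 1) ^ (CARD('d) + 1) + 1) ^ 2 ^ CARD('d)"
    by (simp only: of_nat_add of_nat_power of_nat_1)
  then have "real r * real (card UU) * exp (-2 * lam\<^sup>2 / real (card X))
      \<le> real r * ((real (card X) + 1) ^ (CARD('d) + 1) + 1) ^ 2 ^ CARD('d) * exp (-2 * lam\<^sup>2 / real (card X))"
    by (intro mult_right_mono mult_left_mono) auto
  then have small: "real r * real (card UU) * exp (-2 * lam\<^sup>2 / real (card X)) < 1"
    using few_bad_events by linarith
  have "finite UU" using \<open>finite (halfspace_traces X)\<close> by (simp add: UU_def)
  moreover have UU_sub: "U \<subseteq> X" if "U \<in> UU" for U
    using that \<open>halfspace_traces X \<subseteq> Pow X\<close> by (auto simp: UU_def)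
  ultimately obtain f where f: "\<forall>x\<in>X. f x < r"
    "\<forall>U\<in>UU. \<forall>j<r. real (card U) / real r - lam \<le> real (card {x\<in>U. f x = j})"
    using exists_balanced_coloring[OF assms(1,3) _ UU_sub assms(4) small] by blast
  have "robust_coloring X r t f"
    by (rule robust_coloring_if_balanced[OF assms(1-3) f(1) _ margin]) (use f(2) in \<open>simp add: UU_def\<close>)
  then show ?thesis by blast
qed

text \<open>With \<open>|X| = r t + \<lceil>t\<^sup>4\<^sup>/\<^sup>5\<rceil>\<close> and deviation \<open>lam = |X|\<^sup>3\<^sup>/\<^sup>4\<close>, the number of bad events grows
  polynomially while each has probability \<open>exp (-2 \<surd>|X|)\<close>, and \<open>r\<^sup>2 lam\<close> is eventually
  smaller than the surplus \<open>\<lceil>t\<^sup>4\<^sup>/\<^sup>5\<rceil>\<close>.\<close>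

lemma eventually_robust_coloring_exists:
  assumes "r > 0"
  shows "\<forall>\<^sub>F t in sequentially. \<forall>X :: (real ^ 'd) set.
    finite X \<and> card X = r * t + nat \<lceil>real t powr (4/5)\<rceil> \<and> (\<forall>x\<in>X. int_point x) \<longrightarrow>
    (\<exists>f. robust_coloring X r t f)"
proof -
  define n where "n t = real r * real t + real (nat \<lceil>real t powr (4/5)\<rceil>)" for t :: nat
  have r: "real r > 0" using assms by simp
  have "\<forall>\<^sub>F t in sequentially. real r * ((n t + 1) ^ (CARD('d) + 1) + 1) ^ 2 ^ CARD('d) *
      exp (-2 * (n t powr (3/4))\<^sup>2 / n t) < 1"
    unfolding n_def using r by real_asymp
  moreover have "\<forall>\<^sub>F t in sequentially. real r ^ 2 * n t powr (3/4) < real (nat \<lceil>real t powr (4/5)\<rceil>)"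
    unfolding n_def using r by real_asymp
  ultimately show ?thesis
  proof eventually_elim
    case (elim t)
    show ?case
    proof (intro allI impI)
      fix X :: "(real ^ 'd) set"
      assume X: "finite X \<and> card X = r * t + nat \<lceil>real t powr (4/5)\<rceil> \<and> (\<forall>x\<in>X. int_point x)"
      then have card_X: "real (card X) = n t" by (simp add: n_def)
      show "\<exists>f. robust_coloring X r t f"
      proof (rule robust_coloring_exists[OF _ _ assms, of X "n t powr (3/4)"])
        show "finite X" "\<forall>x\<in>X. int_point x" using X by auto
        show "0 \<le> n t powr (3/4)" by simp
        show "real r * ((real (card X) + 1) ^ (CARD('d) + 1) + 1) ^ 2 ^ CARD('d) *
            exp (-2 * (n t powr (3/4))\<^sup>2 / real (card X)) < 1"
          using elim(1) by (simp only: card_X)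
        show "real r ^ 2 * n t powr (3/4) < real (card X) - real r * real t"
          using elim(2) by (simp add: card_X n_def)
      qed
    qed
  qed
qed

theorem mainTheorem3:
  fixes r :: nat
  assumes "r > 0"
  shows "\<exists>L :: nat \<Rightarrow> nat.
    (\<lambda>t. real (L t) - real r * real t) \<in> o(\<lambda>t. real t) \<and>
    (\<forall>t > 0. \<forall>X :: (real ^ 'd :: finite) set.
       finite X \<and> card X = L t \<and> (\<forall>x\<in>X. int_point x) \<longrightarrow>
       (\<exists>f :: real ^ 'd \<Rightarrow> nat. (\<forall>x\<in>X. f x < r) \<and>
          (\<forall>C. C \<subseteq> X \<and> card C \<le> t \<longrightarrow>
             (\<exists>p. int_point p \<and>
                  (\<forall>j<r. p \<in> convex hull ({x\<in>X. f x = j} - C))))))"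
proof -
  define s where "s t = nat \<lceil>real t powr (4/5)\<rceil>" for t :: nat
  obtain t0 where t0: "\<And>t X. t \<ge> t0 \<Longrightarrow> finite X \<Longrightarrow> card X = r * t + s t \<Longrightarrow> \<forall>x\<in>X. int_point x \<Longrightarrow>
      \<exists>f. robust_coloring (X :: (real ^ 'd) set) r t f"
    using eventually_robust_coloring_exists[OF assms] unfolding s_def eventually_sequentially by blast
  define L where "L t = r * max t t0 + s (max t t0)" for t
  have "\<forall>\<^sub>F t in sequentially. real (L t) - real r * real t = real (s t)"
    unfolding eventually_sequentially L_def by (intro exI[of _ t0]) auto
  moreover have "(\<lambda>t. real (s t)) \<in> o(\<lambda>t. real t)" unfolding s_def by real_asymp
  ultimately have "(\<lambda>t. real (L t) - real r * real t) \<in> o(\<lambda>t. real t)"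
    using landau_o.small.in_cong by metis
  moreover have "\<exists>f. robust_coloring X r t f"
    if "finite X" "card X = L t" "\<forall>x\<in>X. int_point x" for t and X :: "(real ^ 'd) set"
    using t0[of "max t t0" X] that robust_coloring_mono[of X r "max t t0" _ t] by (auto simp: L_def)
  ultimately show ?thesis unfolding robust_coloring_def by blast
qed

end
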